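(* Let $n\ge2$, $0<s<1$, fix $N\in[1,\infty)$, let $\hat U=\{x\in\mathbb{R}^n:\|x\|_N\le 1\}$ and $U=\tfrac{\ell_U}{2}\hat U+q$ with $\ell_U>0$, $q\in\mathbb{R}^n$. Then for all $1\le i<j\le n$ and $1\le k<m\le n$, $$\langle {\bf I}_{ij},{\bf I}_{km}\rangle_{U\times U}=\hat C\,\ell_U^{n+2-2s}\,\delta_{ik}\delta_{jm},$$ where $\hat C$ is a constant depending on $n$ and $s$ (and $N$) but not on $i,j,k,m$, $\ell_U$ or $q$, and $\delta$ is the Kronecker delta.
   Context: $\|x\|_N=(\sum_{k=1}^n|x_k|^N)^{1/N}$. $I_{ij}\in\mathbb{R}^{n\times n}$ is the matrix with $(I_{ij})_{ij}=1$, $(I_{ij})_{ji}=-1$ and all other entries $0$, and ${\bf I}_{ij}(x)=I_{ij}x$. For $E\subset\mathbb{R}^n$ and vector fields ${\bf u},{\bf v}$, $\langle{\bf u},{\bf v}\rangle_{E\times E}=\int_E\int_E\frac{({\bf u}(x)-{\bf u}(y))\cdot({\bf v}(x)-{\bf v}(y))}{|x-y|^{n+2s}}\,dy\,dx$. *)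

theory Defs
  imports "HOL-Analysis.Analysis"
begin

definition lN_norm :: "real \<Rightarrow> real^'n \<Rightarrow> real" where
  "lN_norm N x = (\<Sum>k\<in>UNIV. \<bar>x $ k\<bar> powr N) powr (1 / N)"

definition lN_ball :: "real \<Rightarrow> (real^'n) set" where
  "lN_ball N = {x. lN_norm N x \<le> 1}"

definition Imat :: "'n \<Rightarrow> 'n \<Rightarrow> real^'n^'n" where
  "Imat i j = (\<chi> a b. if a = i \<and> b = j then 1 else if a = j \<and> b = i then -1 else 0)"

definition Ifield :: "'n \<Rightarrow> 'n \<Rightarrow> real^'n \<Rightarrow> real^'n" where
  "Ifield i j x = Imat i j *v x"

definition frac_form :: "real \<Rightarrow> (real^'n) set \<Rightarrow> (real^'n \<Rightarrow> real^'n) \<Rightarrow> (real^'n \<Rightarrow> real^'n) \<Rightarrow> real" where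
  "frac_form s E u v =
     (LINT x:E|lborel. LINT y:E|lborel.
        ((u x - u y) \<bullet> (v x - v y)) / (norm (x - y) powr (real CARD('n) + 2 * s)))"

end

theory Submission
  imports Defs
begin

text \<open>
  For linear fields \<open>x \<mapsto> A x\<close>, \<open>x \<mapsto> B x\<close> the integrand of the form depends only on \<open>w = x - y\<close>,
  through the kernel \<open>(A w \<bullet> B w) / \<bar>w\<bar>^(n+2s)\<close>, which is homogeneous of degree \<open>2 - n - 2s\<close>.
  The affine substitution \<open>x = (l/2) x' + q\<close> in both variables therefore produces the factor
  \<open>(l/2)^(2n) (l/2)^(2-n-2s) = (l/2)^(n+2-2s)\<close>.
  The unit \<open>\<ell>\<^sup>N\<close> ball is invariant under permutations and reflections of coordinates, and so
  is Lebesgue measure. If \<open>{i,j} \<noteq> {k,m}\<close>, reflecting a coordinate in \<open>{i,j}\<close> but not in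
  \<open>{k,m}\<close> flips the sign of the kernel of \<open>I\<^sub>i\<^sub>j, I\<^sub>k\<^sub>m\<close>, so the form vanishes; a permutation
  sending \<open>(i,j)\<close> to \<open>(k,m)\<close> shows that the diagonal values do not depend on the pair.
\<close>

definition diff_kernel_integral :: "'a::euclidean_space set \<Rightarrow> ('a \<Rightarrow> real) \<Rightarrow> real" where
  "diff_kernel_integral E h = (LINT x:E|lborel. LINT y:E|lborel. h (x - y))"

lemma lborel_integral_density_distr:
  fixes T :: "'a::euclidean_space \<Rightarrow> 'a" and f :: "'a \<Rightarrow> real"
  assumes "lborel = density (distr lborel borel T) (\<lambda>_. ennreal d)" and "d \<ge> 0"
    and "T \<in> borel_measurable borel" and "f \<in> borel_measurable borel"
  shows "integral\<^sup>L lborel f = d * integral\<^sup>L lborel (\<lambda>x. f (T x))"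
proof -
  have "integral\<^sup>L lborel f = integral\<^sup>L (distr lborel borel T) (\<lambda>x. d *\<^sub>R f x)"
    by (subst assms(1), rule integral_density) (use assms in auto)
  also have "\<dots> = integral\<^sup>L lborel (\<lambda>x. d *\<^sub>R f (T x))"
    using assms by (intro integral_distr) auto
  finally show ?thesis by simp
qed

lemma diff_kernel_integral_transform:
  fixes T L :: "'a::euclidean_space \<Rightarrow> 'a"
  assumes dens: "lborel = density (distr lborel borel T) (\<lambda>_. ennreal d)" and "d \<ge> 0"
    and [measurable]: "T \<in> borel_measurable borel" "h \<in> borel_measurable borel"
      "A \<in> sets borel" "E \<in> sets borel"
    and preimage: "\<And>y. T y \<in> A \<longleftrightarrow> y \<in> E"
    and diff: "\<And>x y. T x - T y = L (x - y)"
  shows "diff_kernel_integral A h = d * d * diff_kernel_integral E (\<lambda>w. h (L w))"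
proof -
  have ind: "indicator A (T y) = (indicator E y :: real)" for y
    using preimage[of y] by (simp add: indicator_def)
  note transform = lborel_integral_density_distr[OF dens \<open>d \<ge> 0\<close> \<open>T \<in> _\<close>]
  have inner: "(LINT y:A|lborel. h (x - y)) = d * (LINT y:E|lborel. h (x - T y))" for x
    unfolding set_lebesgue_integral_def by (subst transform) (simp_all add: ind)
  have "(LINT x:A|lborel. LINT y:E|lborel. h (x - T y))
      = d * (LINT x:E|lborel. LINT y:E|lborel. h (T x - T y))"
    unfolding set_lebesgue_integral_def[of _ A] by (subst transform) (simp_all add: ind set_lebesgue_integral_def)
  then show ?thesis
    by (simp add: diff_kernel_integral_def inner diff)
qed

lemma diff_kernel_integral_scale:
  "diff_kernel_integral E (\<lambda>w. c * h w) = c * diff_kernel_integral E h"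
  by (simp add: diff_kernel_integral_def)

lemma diff_kernel_integral_affine_image:
  fixes E :: "'a::euclidean_space set"
  assumes "t > 0" and [measurable]: "E \<in> sets borel" "h \<in> borel_measurable borel"
  shows "diff_kernel_integral ((\<lambda>x. t *\<^sub>R x + q) ` E) h
       = t ^ DIM('a) * t ^ DIM('a) * diff_kernel_integral E (\<lambda>w. h (t *\<^sub>R w))"
proof (rule diff_kernel_integral_transform)
  show "lborel = density (distr lborel borel (\<lambda>x. t *\<^sub>R x + q)) (\<lambda>_. ennreal (t ^ DIM('a)))"
    using lborel_affine[of t q] \<open>t > 0\<close> by (simp add: add.commute ennreal_power)
  have mem_image: "x \<in> (\<lambda>x. t *\<^sub>R x + q) ` E \<longleftrightarrow> (1 / t) *\<^sub>R (x - q) \<in> E" for x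
  proof
    have "x = t *\<^sub>R ((1 / t) *\<^sub>R (x - q)) + q"
      using \<open>t > 0\<close> by simp
    then show "(1 / t) *\<^sub>R (x - q) \<in> E \<Longrightarrow> x \<in> (\<lambda>x. t *\<^sub>R x + q) ` E"
      by blast
  qed (use \<open>t > 0\<close> in auto)
  then have "(\<lambda>x. t *\<^sub>R x + q) ` E = (\<lambda>x. (1 / t) *\<^sub>R (x - q)) -` E \<inter> space borel"
    by auto
  also have "\<dots> \<in> sets borel"
    by measurable
  finally show "(\<lambda>x. t *\<^sub>R x + q) ` E \<in> sets borel" .
  show "t *\<^sub>R y + q \<in> (\<lambda>x. t *\<^sub>R x + q) ` E \<longleftrightarrow> y \<in> E" for y
    using \<open>t > 0\<close> by (simp add: mem_image)
  show "t *\<^sub>R x + q - (t *\<^sub>R y + q) = t *\<^sub>R (x - y)" for x y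
    by (simp add: scaleR_diff_right)
qed (use \<open>t > 0\<close> in simp_all)

definition signed_perm :: "('n::finite \<Rightarrow> 'n) \<Rightarrow> ('n \<Rightarrow> real) \<Rightarrow> real^'n \<Rightarrow> real^'n" where
  "signed_perm \<pi> e x = (\<chi> a. e a * x $ \<pi> a)"

lemma signed_perm_nth [simp]: "signed_perm \<pi> e x $ a = e a * x $ \<pi> a"
  by (simp add: signed_perm_def)

lemma linear_signed_perm: "linear (signed_perm \<pi> e)"
  by (rule linearI) (simp_all add: vec_eq_iff algebra_simps)

lemma borel_measurable_signed_perm [measurable]: "signed_perm \<pi> e \<in> borel_measurable borel"
  by (intro borel_measurable_continuous_onI linear_continuous_on)
    (simp add: linear_conv_bounded_linear[symmetric] linear_signed_perm)

lemma signed_perm_diff: "signed_perm \<pi> e x - signed_perm \<pi> e y = signed_perm \<pi> e (x - y)"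
  by (simp add: vec_eq_iff algebra_simps)

lemma sum_abs_signed_perm:
  assumes "bij \<pi>" and "\<And>a. \<bar>e a\<bar> = 1"
  shows "(\<Sum>a\<in>UNIV. g \<bar>signed_perm \<pi> e x $ a\<bar>) = (\<Sum>a\<in>UNIV. g \<bar>x $ a\<bar>)"
  using assms sum.reindex_bij_betw[of \<pi> UNIV UNIV "\<lambda>a. g \<bar>x $ a\<bar>"] by (simp add: abs_mult)

lemma norm_signed_perm:
  assumes "bij \<pi>" and "\<And>a. \<bar>e a\<bar> = 1"
  shows "norm (signed_perm \<pi> e x) = norm x"
  using sum_abs_signed_perm[OF assms, of "\<lambda>t. t\<^sup>2"] by (simp add: norm_vec_def L2_set_def)

lemma Basis_vec_eq_range_axis: "(Basis :: (real^'n) set) = range (\<lambda>i. axis i 1)"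
  by (auto simp: Basis_vec_def)

lemma prod_Basis_vec: "(\<Prod>b\<in>(Basis :: (real^'n) set). f b) = (\<Prod>i\<in>UNIV. f (axis i 1))"
proof -
  have "inj (\<lambda>i::'n. axis i (1::real))"
    by (auto simp: inj_def axis_eq_axis)
  then show ?thesis
    by (simp add: Basis_vec_eq_range_axis prod.reindex)
qed

lemma vimage_signed_perm_box:
  fixes \<pi> :: "'n::finite \<Rightarrow> 'n"
  assumes "bij \<pi>" and sign: "\<And>a. \<bar>e a\<bar> = 1"
  obtains l' u' :: "real^'n" where "signed_perm \<pi> e -` box l u = box l' u'"
    and "\<And>b. u' $ b - l' $ b = u $ inv \<pi> b - l $ inv \<pi> b"
proof
  define \<rho> where "\<rho> = inv \<pi>"
  have \<pi>\<rho>: "\<pi> (\<rho> b) = b" and \<rho>\<pi>: "\<rho> (\<pi> a) = a" for a b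
    using \<open>bij \<pi>\<close> by (simp_all add: \<rho>_def bij_is_surj bij_is_inj surj_f_inv_f)
  have sign': "e a = 1 \<or> e a = -1" for a
    using sign[of a] by linarith
  define l' :: "real^'n" where "l' = (\<chi> b. if e (\<rho> b) = 1 then l $ \<rho> b else - u $ \<rho> b)"
  define u' :: "real^'n" where "u' = (\<chi> b. if e (\<rho> b) = 1 then u $ \<rho> b else - l $ \<rho> b)"
  have bounds: "(l $ \<rho> b < e (\<rho> b) * t \<and> e (\<rho> b) * t < u $ \<rho> b) \<longleftrightarrow> l' $ b < t \<and> t < u' $ b"
    for b t
    using sign'[of "\<rho> b"] by (auto simp: l'_def u'_def)
  have reindex: "(\<forall>a. Q a (\<pi> a)) \<longleftrightarrow> (\<forall>b. Q (\<rho> b) b)" for Q :: "'n \<Rightarrow> 'n \<Rightarrow> bool"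
    by (metis \<pi>\<rho> \<rho>\<pi>)
  show "signed_perm \<pi> e -` box l u = box l' u'"
    by (auto simp: mem_box_cart reindex[where Q = "\<lambda>a b. l $ a < e a * _ $ b \<and> e a * _ $ b < u $ a"] bounds)
  show "u' $ b - l' $ b = u $ inv \<pi> b - l $ inv \<pi> b" for b
    using sign'[of "\<rho> b"] by (auto simp: l'_def u'_def \<rho>_def)
qed

lemma lborel_distr_signed_perm:
  fixes \<pi> :: "'n::finite \<Rightarrow> 'n"
  assumes "bij \<pi>" and "\<And>a. \<bar>e a\<bar> = 1"
  shows "distr lborel borel (signed_perm \<pi> e) = lborel"
proof (rule lborel_eqI[symmetric])
  fix l u :: "real^'n"
  assume le_Basis: "\<And>b. b \<in> Basis \<Longrightarrow> l \<bullet> b \<le> u \<bullet> b"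
  obtain l' u' where vimage: "signed_perm \<pi> e -` box l u = box l' u'"
    and width: "\<And>b. u' $ b - l' $ b = u $ inv \<pi> b - l $ inv \<pi> b"
    using vimage_signed_perm_box[of \<pi> e l u, OF assms] by blast
  have "l' $ b \<le> u' $ b" for b
    using width[of b] le_Basis[of "axis (inv \<pi> b) 1"] by (simp add: Basis_vec_eq_range_axis inner_axis)
  then have "emeasure lborel (box l' u') = (\<Prod>b\<in>Basis. (u' - l') \<bullet> b)"
    by (intro emeasure_lborel_box) (auto simp: Basis_vec_eq_range_axis inner_axis)
  also have "\<dots> = (\<Prod>i\<in>UNIV. u $ inv \<pi> i - l $ inv \<pi> i)"
    by (simp add: prod_Basis_vec inner_axis width)
  also have "\<dots> = (\<Prod>i\<in>UNIV. u $ i - l $ i)"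
    using prod.reindex_bij_betw[of "inv \<pi>" UNIV UNIV "\<lambda>i. u $ i - l $ i"] \<open>bij \<pi>\<close>
    by (simp add: bij_imp_bij_inv)
  finally show "emeasure (distr lborel borel (signed_perm \<pi> e)) (box l u) = (\<Prod>b\<in>Basis. (u - l) \<bullet> b)"
    by (simp add: emeasure_distr vimage prod_Basis_vec inner_axis)
qed simp

lemma diff_kernel_integral_signed_perm:
  fixes \<pi> :: "'n::finite \<Rightarrow> 'n"
  assumes "bij \<pi>" and "\<And>a. \<bar>e a\<bar> = 1"
    and "\<And>x. signed_perm \<pi> e x \<in> E \<longleftrightarrow> x \<in> E"
    and "E \<in> sets borel" and "h \<in> borel_measurable borel"
  shows "diff_kernel_integral E (\<lambda>w. h (signed_perm \<pi> e w)) = diff_kernel_integral E h"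
proof -
  have "lborel = density (distr lborel borel (signed_perm \<pi> e)) (\<lambda>_. ennreal 1)"
    by (simp add: lborel_distr_signed_perm[OF assms(1,2)] density_1)
  from diff_kernel_integral_transform[OF this, of h E E] show ?thesis
    using assms by (simp add: signed_perm_diff)
qed

definition signed_perm_invariant :: "(real^'n::finite) set \<Rightarrow> bool" where
  "signed_perm_invariant E \<longleftrightarrow>
     (\<forall>\<pi> e x. bij \<pi> \<longrightarrow> (\<forall>a. \<bar>e a\<bar> = 1) \<longrightarrow> (signed_perm \<pi> e x \<in> E \<longleftrightarrow> x \<in> E))"

lemma lN_norm_signed_perm:
  assumes "bij \<pi>" and "\<And>a. \<bar>e a\<bar> = 1"
  shows "lN_norm N (signed_perm \<pi> e x) = lN_norm N x"
  using sum_abs_signed_perm[OF assms, of "\<lambda>t. t powr N"] by (simp add: lN_norm_def)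

lemma signed_perm_invariant_lN_ball: "signed_perm_invariant (lN_ball N)"
  by (simp add: signed_perm_invariant_def lN_ball_def lN_norm_signed_perm)

lemma sets_borel_lN_ball [measurable]: "lN_ball N \<in> sets borel"
proof -
  have "lN_norm N \<in> borel_measurable borel"
    unfolding lN_norm_def[abs_def] by measurable
  then show ?thesis
    unfolding lN_ball_def by measurable
qed

definition gagliardo_kernel :: "real \<Rightarrow> real^'n^'n \<Rightarrow> real^'n^'n \<Rightarrow> real^'n \<Rightarrow> real" where
  "gagliardo_kernel c A B w = ((A *v w) \<bullet> (B *v w)) / norm w powr c"

lemma borel_measurable_gagliardo_kernel [measurable]:
  "gagliardo_kernel c A B \<in> borel_measurable borel"
proof -
  have "(\<lambda>w. (A *v w) \<bullet> (B *v w)) \<in> borel_measurable borel"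
    by (intro borel_measurable_continuous_onI continuous_intros linear_continuous_on
        matrix_vector_mul_bounded_linear)
  then show ?thesis
    unfolding gagliardo_kernel_def[abs_def] by measurable
qed

lemma gagliardo_kernel_scaleR:
  assumes "t > 0"
  shows "gagliardo_kernel c A B (t *\<^sub>R w) = t powr (2 - c) * gagliardo_kernel c A B w"
  using assms
  by (simp add: gagliardo_kernel_def matrix_vector_mult_scaleR powr_mult powr_diff power2_eq_square)

lemma frac_form_linear_fields:
  "frac_form s E (\<lambda>x. A *v x) (\<lambda>x. B *v x)
     = diff_kernel_integral E (gagliardo_kernel (real CARD('n) + 2 * s) A B)"
  for A B :: "real^'n^'n"
  by (simp add: frac_form_def diff_kernel_integral_def gagliardo_kernel_def
      matrix_vector_mult_diff_distrib)

lemma frac_form_linear_fields_affine_image: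
  fixes A B :: "real^'n^'n"
  assumes "t > 0" and "E \<in> sets borel"
  shows "frac_form s ((\<lambda>x. t *\<^sub>R x + q) ` E) (\<lambda>x. A *v x) (\<lambda>x. B *v x)
       = t powr (real CARD('n) + 2 - 2 * s) * frac_form s E (\<lambda>x. A *v x) (\<lambda>x. B *v x)"
proof -
  define c where "c = real CARD('n) + 2 * s"
  have "t ^ CARD('n) * t ^ CARD('n) * t powr (2 - c) = t powr (real CARD('n) + 2 - 2 * s)"
    using \<open>t > 0\<close> by (simp add: c_def powr_realpow[symmetric] powr_add[symmetric] add_diff_eq)
  moreover have "frac_form s ((\<lambda>x. t *\<^sub>R x + q) ` E) (\<lambda>x. A *v x) (\<lambda>x. B *v x)
      = t ^ CARD('n) * t ^ CARD('n) * t powr (2 - c) * frac_form s E (\<lambda>x. A *v x) (\<lambda>x. B *v x)"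
    using assms
    by (simp add: frac_form_linear_fields diff_kernel_integral_affine_image gagliardo_kernel_scaleR
        diff_kernel_integral_scale c_def)
  ultimately show ?thesis
    by simp
qed

lemma Imat_mult_vec:
  assumes "i \<noteq> j"
  shows "Imat i j *v w = w $ j *\<^sub>R axis i 1 - w $ i *\<^sub>R axis j 1"
  using assms
  by (auto simp: vec_eq_iff Imat_def matrix_vector_mult_def axis_def
      if_distrib[where f = "\<lambda>x. x * _"] cong: if_cong)

lemma inner_Imat_Imat:
  assumes "i \<noteq> j" and "k \<noteq> m"
  shows "(Imat i j *v w) \<bullet> (Imat k m *v w) =
    (if i = k then w $ j * w $ m else 0) - (if i = m then w $ j * w $ k else 0)
    - (if j = k then w $ i * w $ m else 0) + (if j = m then w $ i * w $ k else 0)"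
  using assms by (simp add: Imat_mult_vec inner_diff_left inner_diff_right inner_axis_axis)

lemma frac_form_Ifield_eq_0:
  fixes i j k m :: "'n::finite"
  assumes "E \<in> sets borel" and "signed_perm_invariant E"
    and "i \<noteq> j" and "k \<noteq> m" and "{i, j} \<noteq> {k, m}"
  shows "frac_form s E (Ifield i j) (Ifield k m) = 0"
proof -
  obtain r where "r \<in> {i, j}" and "r \<notin> {k, m}"
    using assms(3-5) by auto
  define e where "e = (\<lambda>a. if a = r then - 1 else 1 :: real)"
  let ?h = "gagliardo_kernel (real CARD('n) + 2 * s) (Imat i j) (Imat k m)"
  \<comment> \<open>reflecting coordinate \<open>r\<close> changes the sign of exactly one factor in every term of the numerator\<close>
  have "\<bar>e a\<bar> = 1" for a
    by (simp add: e_def)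
  then have "diff_kernel_integral E ?h = diff_kernel_integral E (\<lambda>w. ?h (signed_perm id e w))"
    using assms(1,2) by (simp add: diff_kernel_integral_signed_perm signed_perm_invariant_def)
  also have "(\<lambda>w. ?h (signed_perm id e w)) = (\<lambda>w. (- 1) * ?h w)"
    using \<open>r \<in> {i, j}\<close> \<open>r \<notin> {k, m}\<close> assms(3,4)
    by (auto simp: gagliardo_kernel_def inner_Imat_Imat norm_signed_perm e_def)
  also have "diff_kernel_integral E \<dots> = (- 1) * diff_kernel_integral E ?h"
    by (rule diff_kernel_integral_scale)
  finally have "diff_kernel_integral E ?h = 0"
    by simp
  then show ?thesis
    by (simp add: Ifield_def[abs_def] frac_form_linear_fields)
qed

lemma ex_bij_map_two_points:
  fixes i j k m :: 'a
  assumes "i \<noteq> j" and "k \<noteq> m"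
  shows "\<exists>\<pi>. bij \<pi> \<and> \<pi> i = k \<and> \<pi> j = m"
proof -
  define j' where "j' = Transposition.transpose i k j"
  have "j' \<noteq> k"
    using \<open>i \<noteq> j\<close> unfolding j'_def by (metis transpose_apply_first transpose_eq_imp_eq)
  then show ?thesis
    using \<open>k \<noteq> m\<close>
    by (intro exI[of _ "Transposition.transpose j' m \<circ> Transposition.transpose i k"]) (auto simp: bij_comp j'_def transpose_def)
qed

lemma frac_form_Ifield_diag_eq:
  fixes i j k m :: "'n::finite"
  assumes "E \<in> sets borel" and "signed_perm_invariant E" and "i \<noteq> j" and "k \<noteq> m"
  shows "frac_form s E (Ifield i j) (Ifield i j) = frac_form s E (Ifield k m) (Ifield k m)"
proof -
  obtain \<pi> where "bij \<pi>" "\<pi> i = k" "\<pi> j = m"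
    using ex_bij_map_two_points[OF assms(3,4)] by blast
  let ?h = "\<lambda>i j. gagliardo_kernel (real CARD('n) + 2 * s) (Imat i j) (Imat i j)"
  have "?h i j (signed_perm \<pi> (\<lambda>_. 1) w) = ?h k m w" for w
    using \<open>bij \<pi>\<close> \<open>\<pi> i = k\<close> \<open>\<pi> j = m\<close> assms(3,4)
    by (simp add: gagliardo_kernel_def inner_Imat_Imat norm_signed_perm)
  then have "diff_kernel_integral E (?h i j) = diff_kernel_integral E (?h k m)"
    using diff_kernel_integral_signed_perm[of \<pi> "\<lambda>_. 1" E "?h i j"] \<open>bij \<pi>\<close> assms(1,2)
    by (simp add: signed_perm_invariant_def)
  then show ?thesis
    by (simp add: Ifield_def[abs_def] frac_form_linear_fields)
qed

lemma frac_form_Ifield_kronecker: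
  fixes i j k m a b :: "'n::{finite,linorder}"
  assumes "E \<in> sets borel" and "signed_perm_invariant E"
    and "i < j" and "k < m" and "a \<noteq> b"
  shows "frac_form s E (Ifield i j) (Ifield k m)
       = frac_form s E (Ifield a b) (Ifield a b) * (if i = k \<and> j = m then 1 else 0)"
proof (cases "i = k \<and> j = m")
  case True
  then show ?thesis
    using assms frac_form_Ifield_diag_eq[of E i j a b s] by simp
next
  case False
  then have "{i, j} \<noteq> {k, m}"
    using assms(3,4) by (auto simp: doubleton_eq_iff)
  then show ?thesis
    using False assms frac_form_Ifield_eq_0[of E i j k m s] by auto
qed

theorem corollary4p3:
  fixes s N :: real
  assumes "CARD('n::{finite,linorder}) \<ge> 2" and "0 < s" and "s < 1" and "1 \<le> N"
  shows "\<exists>C::real. \<forall>(l::real) (q::real^'n::{finite,linorder}) (i::'n::{finite,linorder}) j k m.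
           0 < l \<longrightarrow> i < j \<longrightarrow> k < m \<longrightarrow>
           frac_form s ((\<lambda>x. (l / 2) *\<^sub>R x + q) ` lN_ball N) (Ifield i j) (Ifield k m)
             = C * l powr (real CARD('n::{finite,linorder}) + 2 - 2 * s) * (if i = k \<and> j = m then 1 else 0)"
proof -
  obtain a b :: 'n where "a \<noteq> b"
    using assms(1) by (metis card_2_iff ex_card)
  let ?p = "real CARD('n) + 2 - 2 * s"
  define C where "C = frac_form s (lN_ball N) (Ifield a b) (Ifield a b) / 2 powr ?p"
  show ?thesis
  proof (intro exI[of _ C] allI impI)
    fix l :: real and q :: "real^'n::{finite,linorder}" and i j k m :: 'n
    assume "0 < l" and "i < j" and "k < m"
    have "frac_form s ((\<lambda>x. (l / 2) *\<^sub>R x + q) ` lN_ball N) (Ifield i j) (Ifield k m)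
        = (l / 2) powr ?p * frac_form s (lN_ball N) (Ifield i j) (Ifield k m)"
      using frac_form_linear_fields_affine_image[of "l / 2" "lN_ball N" s q] \<open>0 < l\<close>
      by (simp add: Ifield_def[abs_def])
    also have "\<dots> = C * l powr ?p * (if i = k \<and> j = m then 1 else 0)"
      using frac_form_Ifield_kronecker[OF sets_borel_lN_ball signed_perm_invariant_lN_ball
          \<open>i < j\<close> \<open>k < m\<close> \<open>a \<noteq> b\<close>] \<open>0 < l\<close>
      by (simp add: C_def powr_divide)
    finally show "frac_form s ((\<lambda>x. (l / 2) *\<^sub>R x + q) ` lN_ball N) (Ifield i j) (Ifield k m)
        = C * l powr ?p * (if i = k \<and> j = m then 1 else 0)" .
  qed
qed

end
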